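(* Let $A\subseteq\mathbb{R}^d$ be open, let $g:\mathbb{R}^d\to A$ be Lipschitz with constant $L_g$, and let $f:A\to\mathbb{R}^m$ be intrinsic Lipschitz (on $A$) with constant $L_f$. Then $f\circ g$ is intrinsic Lipschitz with constant $L_fL_g$.
   Context: Length of a continuous curve: $\ell(\gamma)=\sup\sum_{k}\|\gamma(t_k)-\gamma(t_{k-1})\|$ over partitions of $[0,1]$. Intrinsic metric on a set $S\subseteq\mathbb{R}^d$: $\rho(x,y)=\inf\{\ell(\gamma):\gamma:[0,1]\to S\text{ continuous from }x\text{ to }y\}$ ($\infty$ if no such curve). A map $h:S\to\mathbb{R}^m$ is intrinsic Lipschitz with constant $L$ if $\|h(x)-h(y)\|\le L\rho(x,y)$ for all $x,y\in S$. *)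

theory Defs
  imports "HOL-Analysis.Analysis"
begin

definition curve_length :: "(real \<Rightarrow> 'a::real_normed_vector) \<Rightarrow> ereal" where
  "curve_length \<gamma> =
     (SUP p \<in> {(n, t). t 0 = 0 \<and> t n = 1 \<and> (\<forall>k<n. t k \<le> t (Suc k))}.
        ereal (\<Sum>k\<in>{1..fst p}. norm (\<gamma> (snd p k) - \<gamma> (snd p (k - 1)))))"

text \<open>Intrinsic metric on S; the infimum over the empty set is \<infinity>.\<close>
definition intrinsic_dist :: "'a::real_normed_vector set \<Rightarrow> 'a \<Rightarrow> 'a \<Rightarrow> ereal" where
  "intrinsic_dist S x y =
     (INF \<gamma> \<in> {\<gamma>. continuous_on {0..1} \<gamma> \<and> \<gamma> ` {0..1} \<subseteq> S \<and> \<gamma> 0 = x \<and> \<gamma> 1 = y}.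
        curve_length \<gamma>)"

definition intrinsic_lipschitz ::
    "real \<Rightarrow> 'a::real_normed_vector set \<Rightarrow> ('a \<Rightarrow> 'b::real_normed_vector) \<Rightarrow> bool" where
  "intrinsic_lipschitz L S h \<longleftrightarrow>
     (\<forall>x\<in>S. \<forall>y\<in>S. intrinsic_dist S x y \<noteq> \<infinity> \<longrightarrow>
        ereal (norm (h x - h y)) \<le> ereal L * intrinsic_dist S x y)"

end

theory Submission
  imports Defs
begin

text \<open>The composite of a Lipschitz map with a segment is a Lipschitz curve in \<open>A\<close>, so the
  intrinsic distance in \<open>A\<close> between \<open>g x\<close> and \<open>g y\<close> is at most \<open>L\<^sub>g |x - y|\<close>; in
  \<open>\<real>\<^sup>d\<close> itself the intrinsic distance is the Euclidean one. Multiplying by \<open>L\<^sub>f\<close> gives the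
  claim, once one knows \<open>L\<^sub>f \<ge> 0\<close>, which holds because a short segment in the open set \<open>A\<close>
  has positive finite intrinsic length.\<close>

lemma partition_point_in_unit_interval:
  fixes t :: "nat \<Rightarrow> real"
  assumes "t 0 = 0" "t n = 1" "\<forall>k<n. t k \<le> t (Suc k)" "k \<le> n"
  shows "t k \<in> {0..1}"
proof -
  have "t 0 \<le> t k" "t k \<le> t n"
    using assms(3,4) by (auto intro: lift_Suc_mono_le_ivl[of "{..<n}" t])
  then show ?thesis
    using assms(1,2) by simp
qed

lemma curve_length_ge_partition_sum:
  fixes t :: "nat \<Rightarrow> real"
  assumes "t 0 = 0" "t n = 1" "\<forall>k<n. t k \<le> t (Suc k)"
  shows "ereal (\<Sum>k\<in>{1..n}. norm (\<gamma> (t k) - \<gamma> (t (k - 1)))) \<le> curve_length \<gamma>"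
  unfolding curve_length_def
  by (rule SUP_upper2[of "(n, t)"]) (use assms in auto)

lemma curve_length_ge_norm_endpoints: "ereal (norm (\<gamma> 1 - \<gamma> 0)) \<le> curve_length \<gamma>"
  using curve_length_ge_partition_sum[of "\<lambda>k. if k = 0 then 0 else 1" 1 \<gamma>] by simp

lemma curve_length_le_lipschitz:
  fixes \<gamma> :: "real \<Rightarrow> 'a::real_normed_vector"
  assumes "L-lipschitz_on {0..1} \<gamma>"
  shows "curve_length \<gamma> \<le> ereal L"
  unfolding curve_length_def
proof (rule SUP_least, clarify)
  fix n and t :: "nat \<Rightarrow> real"
  assume t0: "t 0 = 0" and tn: "t n = 1" and mono: "\<forall>k<n. t k \<le> t (Suc k)"
  have "(\<Sum>k\<in>{1..n}. norm (\<gamma> (t k) - \<gamma> (t (k - 1)))) \<le> (\<Sum>k\<in>{1..n}. L * (t k - t (k - 1)))"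
  proof (rule sum_mono)
    fix k assume k: "k \<in> {1..n}"
    then have "t (k - 1) \<le> t k"
      using mono by (cases k) auto
    moreover have "t k \<in> {0..1}" "t (k - 1) \<in> {0..1}"
      using partition_point_in_unit_interval[OF t0 tn mono] k by auto
    ultimately show "norm (\<gamma> (t k) - \<gamma> (t (k - 1))) \<le> L * (t k - t (k - 1))"
      using lipschitz_on_normD[OF assms, of "t k" "t (k - 1)"] by simp
  qed
  also have "\<dots> = L * (\<Sum>k\<in>{1..n}. t k - t (k - 1))"
    by (simp add: sum_distrib_left)
  also have "(\<Sum>k\<in>{1..n}. t k - t (k - 1)) = t n - t 0"
    by (induction n) auto
  finally show "ereal (\<Sum>k\<in>{1..fst (n, t)}. norm (\<gamma> (snd (n, t) k) - \<gamma> (snd (n, t) (k - 1))))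
      \<le> ereal L"
    using t0 tn by simp
qed

lemma lipschitz_on_linepath: "lipschitz_on (norm (b - a)) S (linepath a b)"
proof (rule lipschitz_onI)
  fix s u :: real
  have "linepath a b s - linepath a b u = (s - u) *\<^sub>R (b - a)"
    by (simp add: linepath_def algebra_simps)
  then show "dist (linepath a b s) (linepath a b u) \<le> norm (b - a) * dist s u"
    by (simp add: dist_norm)
qed simp

lemma intrinsic_dist_ge_norm: "ereal (norm (y - x)) \<le> intrinsic_dist S x y"
  unfolding intrinsic_dist_def
  by (rule INF_greatest) (use curve_length_ge_norm_endpoints in auto)

lemma intrinsic_dist_le_lipschitz_curve:
  fixes \<gamma> :: "real \<Rightarrow> 'a::real_normed_vector"
  assumes "L-lipschitz_on {0..1} \<gamma>" "\<gamma> ` {0..1} \<subseteq> S"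
  shows "intrinsic_dist S (\<gamma> 0) (\<gamma> 1) \<le> ereal L"
proof -
  have "intrinsic_dist S (\<gamma> 0) (\<gamma> 1) \<le> curve_length \<gamma>"
    unfolding intrinsic_dist_def
    using assms lipschitz_on_continuous_on by (intro INF_lower) auto
  also have "\<dots> \<le> ereal L"
    by (rule curve_length_le_lipschitz[OF assms(1)])
  finally show ?thesis .
qed

lemma intrinsic_dist_closed_segment:
  assumes "closed_segment x y \<subseteq> S"
  shows "intrinsic_dist S x y = ereal (norm (y - x))"
  using intrinsic_dist_le_lipschitz_curve[OF lipschitz_on_linepath[where a = x and b = y], where S = S]
    intrinsic_dist_ge_norm[of y x S] assms
  by (simp add: linepath_image_01 linepath_0' linepath_1')

lemma intrinsic_dist_lipschitz_image_le:
  fixes g :: "'a::real_normed_vector \<Rightarrow> 'b::real_normed_vector"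
  assumes "convex T" "L-lipschitz_on T g" "g ` T \<subseteq> S" "x \<in> T" "y \<in> T"
  shows "intrinsic_dist S (g x) (g y) \<le> ereal (L * dist x y)"
proof -
  have segment: "linepath x y ` {0..1} \<subseteq> T"
    using assms(1,4,5) by (simp add: linepath_image_01 closed_segment_subset)
  have lip: "lipschitz_on (L * norm (y - x)) {0..1} (g \<circ> linepath x y)"
    by (rule lipschitz_on_compose[OF lipschitz_on_linepath lipschitz_on_subset[OF assms(2) segment]])
  have img: "(g \<circ> linepath x y) ` {0..1} \<subseteq> S"
    using segment assms(3) by (auto simp: image_comp[symmetric])
  show ?thesis
    using intrinsic_dist_le_lipschitz_curve[OF lip img]
    by (simp add: linepath_0' linepath_1' dist_norm norm_minus_commute)
qed

lemma intrinsic_lipschitz_nonneg: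
  fixes f :: "'a::euclidean_space \<Rightarrow> 'b::real_normed_vector"
  assumes "open S" "S \<noteq> {}" "intrinsic_lipschitz L S f"
  shows "0 \<le> L"
proof -
  obtain a e where "a \<in> S" "e > 0" and ball: "ball a e \<subseteq> S"
    using assms(1,2) open_contains_ball by blast
  obtain i :: 'a where "i \<in> Basis"
    using nonempty_Basis by blast
  define b where "b = a + (e / 2) *\<^sub>R i"
  have norm_ba: "norm (b - a) = e / 2"
    using \<open>i \<in> Basis\<close> \<open>e > 0\<close> by (simp add: b_def)
  then have "closed_segment a b \<subseteq> S"
    using ball \<open>e > 0\<close>
    by (intro order_trans[OF closed_segment_subset[of a "ball a e" b] ball])
       (auto simp: dist_norm norm_minus_commute)
  then have "intrinsic_dist S a b = ereal (e / 2)" "b \<in> S"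
    using intrinsic_dist_closed_segment norm_ba by auto
  with assms(3) \<open>a \<in> S\<close> have "norm (f a - f b) \<le> L * (e / 2)"
    unfolding intrinsic_lipschitz_def by (metis ereal_less_eq(3) PInfty_neq_ereal(1) times_ereal.simps(1))
  then have "0 \<le> L * (e / 2)"
    using norm_ge_zero order_trans by blast
  then show "0 \<le> L"
    using \<open>e > 0\<close> by (simp add: zero_le_mult_iff)
qed

theorem lemma3p9:
  fixes A :: "'a::euclidean_space set"
    and g :: "'a \<Rightarrow> 'a"
    and f :: "'a \<Rightarrow> 'b::euclidean_space"
    and Lf Lg :: real
  assumes "open A"
    and "range g \<subseteq> A"
    and "lipschitz_on Lg UNIV g"
    and "intrinsic_lipschitz Lf A f"
  shows "intrinsic_lipschitz (Lf * Lg) UNIV (f \<circ> g)"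
  unfolding intrinsic_lipschitz_def
proof (intro ballI impI)
  fix x y :: 'a
  have "0 \<le> Lf"
    using intrinsic_lipschitz_nonneg assms(1,2,4) by blast
  have dist_A: "intrinsic_dist A (g x) (g y) \<le> ereal (Lg * dist x y)"
    using intrinsic_dist_lipschitz_image_le[OF convex_UNIV assms(3)] assms(2) by simp
  have "ereal (norm (f (g x) - f (g y))) \<le> ereal Lf * intrinsic_dist A (g x) (g y)"
    using assms(2,4) dist_A unfolding intrinsic_lipschitz_def by force
  also have "\<dots> \<le> ereal Lf * ereal (Lg * dist x y)"
    using dist_A \<open>0 \<le> Lf\<close> by (intro ereal_mult_left_mono) auto
  also have "\<dots> = ereal (Lf * Lg) * intrinsic_dist UNIV x y"
    by (simp add: intrinsic_dist_closed_segment dist_norm norm_minus_commute)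
  finally show "ereal (norm ((f \<circ> g) x - (f \<circ> g) y)) \<le> ereal (Lf * Lg) * intrinsic_dist UNIV x y"
    by simp
qed

end
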